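(* Let $c\in\mathbb{R}$ and let $\kappa:(c,\infty)\to\mathbb{R}$ be a function which is bounded from above with $\kappa(x)\to0$ as $x\to\infty$. Then $\kappa$ has a majorant $\gamma:(c,\infty)\to\mathbb{R}$ (i.e. $\gamma\ge\kappa$) of class $C^\infty$ such that $\gamma(x)\to0$ as $x\to\infty$ and $$(-1)^k\gamma^{(k)}(x)\ge0,\qquad x>c,\ k=0,1,2,\dots.$$ *)

theory Defs
  imports "HOL-Analysis.Analysis"
begin

definition smooth_on :: "real set \<Rightarrow> (real \<Rightarrow> real) \<Rightarrow> bool" where
  "smooth_on S f \<longleftrightarrow> (\<forall>k::nat. \<forall>x\<in>S. ((deriv ^^ k) f) differentiable (at x))"

end

theory Submission
  imports Defs "HOL-Real_Asymp.Real_Asymp"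
begin

text \<open>
  Let \<open>s n\<close> be the supremum of \<open>max 0 \<kappa>\<close> on \<open>(c + n, \<infinity>)\<close>. This sequence is
  nonnegative, nonincreasing and tends to \<open>0\<close>, so it is the sum of its nonnegative
  decrements \<open>d m = s m - s (m + 1)\<close>. The decaying exponential
  \<open>exp 1 * d m * exp ((c - x) / (m + 1))\<close> is completely monotone and at least \<open>d m\<close>
  for \<open>x \<le> c + m + 1\<close>; summing these exponentials gives a completely monotone function
  \<open>\<gamma>\<close> with \<open>\<gamma> x \<ge> s n \<ge> \<kappa> x\<close> whenever \<open>c + n < x \<le> c + n + 1\<close>, and \<open>\<gamma>\<close> tends
  to \<open>0\<close> by dominated convergence (Tannery).
\<close>

definition decay_series :: "(nat \<Rightarrow> real) \<Rightarrow> real \<Rightarrow> nat \<Rightarrow> real \<Rightarrow> real" where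
  "decay_series a c k x = (\<Sum>m. a m * (-1 / real (Suc m)) ^ k * exp ((c - x) / real (Suc m)))"

text \<open>\<open>decay_series a c k\<close> is the \<open>k\<close>-th derivative of \<open>decay_series a c 0\<close> on \<open>(c, \<infinity>)\<close>.\<close>

definition tail_sup :: "(real \<Rightarrow> real) \<Rightarrow> real \<Rightarrow> nat \<Rightarrow> real" where
  "tail_sup \<kappa> c n = Sup ((\<lambda>x. max 0 (\<kappa> x)) ` {c + real n<..})"

lemma norm_decay_term_le:
  fixes a :: "nat \<Rightarrow> real"
  assumes "a m \<ge> 0" "c \<le> x"
  shows "norm (a m * (-1 / real (Suc m)) ^ k * exp ((c - x) / real (Suc m))) \<le> a m"
proof -
  have "\<bar>(-1 / real (Suc m)) ^ k\<bar> \<le> 1"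
    by (simp add: power_abs power_le_one)
  moreover have "exp ((c - x) / real (Suc m)) \<le> 1"
    using assms by (simp add: divide_nonpos_pos)
  ultimately have "\<bar>(-1 / real (Suc m)) ^ k\<bar> * exp ((c - x) / real (Suc m)) \<le> 1"
    by (simp add: mult_le_one)
  then have "a m * (\<bar>(-1 / real (Suc m)) ^ k\<bar> * exp ((c - x) / real (Suc m))) \<le> a m"
    using mult_left_mono[OF _ \<open>a m \<ge> 0\<close>] by fastforce
  then show ?thesis
    using \<open>a m \<ge> 0\<close> by (simp add: abs_mult)
qed

lemma summable_decay_terms:
  fixes a :: "nat \<Rightarrow> real"
  assumes "\<And>m. a m \<ge> 0" "summable a" "c \<le> x"
  shows "summable (\<lambda>m. a m * (-1 / real (Suc m)) ^ k * exp ((c - x) / real (Suc m)))"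
  by (rule summable_comparison_test[OF _ assms(2)]) (use norm_decay_term_le assms in auto)

lemma decay_term_has_derivative:
  fixes a b :: real
  assumes "b \<noteq> 0"
  shows "((\<lambda>x. a * (-1 / b) ^ k * exp ((c - x) / b))
           has_field_derivative a * (-1 / b) ^ Suc k * exp ((c - x) / b)) (at x)"
proof -
  have "((\<lambda>x. a * (-1 / b) ^ k * exp ((c - x) / b))
          has_field_derivative a * (-1 / b) ^ k * (exp ((c - x) / b) * (-1 / b))) (at x)"
    using assms by (auto intro!: derivative_eq_intros)
  then show ?thesis
    by (simp add: algebra_simps)
qed

lemma decay_series_has_derivative:
  fixes a :: "nat \<Rightarrow> real"
  assumes a_nonneg: "\<And>m. a m \<ge> 0" and a_summable: "summable a" and "c < x"
  shows "(decay_series a c k has_field_derivative decay_series a c (Suc k) x) (at x)"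
  unfolding decay_series_def
proof (rule has_field_derivative_series'(2)[where S = "{c<..}" and x0 = x])
  show "uniformly_convergent_on {c<..}
          (\<lambda>n x. \<Sum>i<n. a i * (-1 / real (Suc i)) ^ Suc k * exp ((c - x) / real (Suc i)))"
  proof (rule Weierstrass_m_test'[OF _ a_summable])
    fix n y assume "y \<in> {c<..}"
    then show "norm (a n * (-1 / real (Suc n)) ^ Suc k * exp ((c - y) / real (Suc n))) \<le> a n"
      by (intro norm_decay_term_le a_nonneg) auto
  qed
  show "summable (\<lambda>n. a n * (-1 / real (Suc n)) ^ k * exp ((c - x) / real (Suc n)))"
    using summable_decay_terms[OF a_nonneg a_summable] \<open>c < x\<close> by simp
qed (use \<open>c < x\<close> decay_term_has_derivative in \<open>auto intro: has_field_derivative_at_within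
       simp: interior_open\<close>)

lemma higher_deriv_decay_series:
  fixes a :: "nat \<Rightarrow> real"
  assumes "\<And>m. a m \<ge> 0" "summable a" "c < x"
  shows "(deriv ^^ k) (decay_series a c 0) x = decay_series a c k x"
  using \<open>c < x\<close>
proof (induction k arbitrary: x)
  case (Suc k)
  have "eventually (\<lambda>y. y \<in> {c<..}) (nhds x)"
    using Suc.prems by (intro eventually_nhds_in_open) auto
  then have "eventually (\<lambda>y. (deriv ^^ k) (decay_series a c 0) y = decay_series a c k y) (nhds x)"
    by eventually_elim (use Suc.IH in auto)
  then have "deriv ((deriv ^^ k) (decay_series a c 0)) x = deriv (decay_series a c k) x"
    by (rule deriv_cong_ev) simp
  also have "\<dots> = decay_series a c (Suc k) x"
    by (rule DERIV_imp_deriv[OF decay_series_has_derivative[OF assms(1,2) Suc.prems]])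
  finally show ?case
    by simp
qed simp

lemma smooth_on_decay_series:
  fixes a :: "nat \<Rightarrow> real"
  assumes "\<And>m. a m \<ge> 0" "summable a"
  shows "smooth_on {c<..} (decay_series a c 0)"
  unfolding smooth_on_def
proof (intro allI ballI)
  fix k x assume "x \<in> {c<..}"
  then have "((deriv ^^ k) (decay_series a c 0) has_field_derivative decay_series a c (Suc k) x) (at x)"
    by (intro has_field_derivative_transform_within_open[OF decay_series_has_derivative[OF assms],
          of _ _ "{c<..}"]) (auto simp: higher_deriv_decay_series[OF assms])
  then show "(deriv ^^ k) (decay_series a c 0) differentiable (at x)"
    unfolding differentiable_def has_field_derivative_def by blast
qed

lemma decay_series_sign:
  fixes a :: "nat \<Rightarrow> real"
  assumes "\<And>m. a m \<ge> 0" "summable a" "c \<le> x"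
  shows "(-1) ^ k * decay_series a c k x \<ge> 0"
proof -
  have sign_cancel: "(-1) ^ k * (a m * (-1 / real (Suc m)) ^ k * e) = a m * (1 / real (Suc m)) ^ k * e"
    for m and e :: real
    by (simp add: power_mult_distrib[symmetric])
  have "(-1) ^ k * decay_series a c k x
          = (\<Sum>m. (-1) ^ k * (a m * (-1 / real (Suc m)) ^ k * exp ((c - x) / real (Suc m))))"
    unfolding decay_series_def by (rule suminf_mult[OF summable_decay_terms[OF assms], symmetric])
  also have "\<dots> \<ge> 0"
    by (intro suminf_nonneg summable_mult summable_decay_terms[OF assms])
       (simp only: sign_cancel, simp add: assms(1))
  finally show ?thesis .
qed

lemma exp_decay_tendsto_zero:
  fixes b c :: real
  assumes "b > 0"
  shows "((\<lambda>x. exp ((c - x) / b)) \<longlongrightarrow> 0) at_top"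
proof -
  have "filterlim (\<lambda>x::real. (c - x) / b) at_bot at_top"
    using assms by real_asymp
  then show ?thesis
    by (rule filterlim_compose[OF exp_at_bot])
qed

lemma decay_series_tendsto_zero:
  fixes a :: "nat \<Rightarrow> real"
  assumes a_nonneg: "\<And>m. a m \<ge> 0" and a_summable: "summable a"
  shows "(decay_series a c 0 \<longlongrightarrow> 0) at_top"
proof -
  have terms_tendsto: "((\<lambda>x. a m * exp ((c - x) / real (Suc m))) \<longlongrightarrow> 0) at_top" for m
    by (intro tendsto_mult_right_zero exp_decay_tendsto_zero) simp
  have "eventually (\<lambda>(m, x). c \<le> x) (sequentially \<times>\<^sub>F at_top)"
    by (simp add: eventually_prod2)
  then have "eventually (\<lambda>(m, x). norm (a m * exp ((c - x) / real (Suc m))) \<le> a m)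
               (sequentially \<times>\<^sub>F at_top)"
    by (rule eventually_mono) (use norm_decay_term_le[where k = 0] a_nonneg in auto)
  then have "((\<lambda>x. \<Sum>m. a m * exp ((c - x) / real (Suc m))) \<longlongrightarrow> (\<Sum>m. 0 :: real)) at_top"
    using tannerys_theorem[OF terms_tendsto _ a_summable] by simp
  then show ?thesis
    by (simp add: decay_series_def [abs_def])
qed

lemma summable_decrements:
  fixes s :: "nat \<Rightarrow> real"
  assumes "s \<longlonglongrightarrow> 0"
  shows "summable (\<lambda>m. s m - s (Suc m))"
  using telescope_sums'[OF assms] by (rule sums_summable)

text \<open>
  On \<open>(c + n, c + n + 1]\<close> every exponential with index \<open>m \<ge> n\<close> is at least \<open>exp (-1)\<close>,
  which the factor \<open>exp 1\<close> in the weights compensates.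
\<close>

lemma tail_le_decay_series:
  fixes s :: "nat \<Rightarrow> real"
  assumes "decseq s" "s \<longlonglongrightarrow> 0" "c \<le> x" "x - c \<le> real n + 1"
  shows "s n \<le> decay_series (\<lambda>m. exp 1 * (s m - s (Suc m))) c 0 x"
proof -
  define a where "a = (\<lambda>m. exp 1 * (s m - s (Suc m)))"
  define t where "t m = a m * exp ((c - x) / real (Suc m))" for m
  have a_nonneg: "a m \<ge> 0" for m
    using \<open>decseq s\<close> by (simp add: a_def decseq_SucD)
  have telescope: "(\<lambda>m. s (m + n) - s (Suc (m + n))) sums s n"
    using telescope_sums'[OF LIMSEQ_ignore_initial_segment[OF \<open>s \<longlonglongrightarrow> 0\<close>]] by simp
  have "summable a"
    unfolding a_def by (intro summable_mult summable_decrements assms(2))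
  then have t_summable: "summable t"
    unfolding t_def [abs_def] using summable_decay_terms[where k = 0] a_nonneg \<open>c \<le> x\<close> by simp
  have decrement_le: "s (m + n) - s (Suc (m + n)) \<le> t (m + n)" for m
  proof -
    have "-1 \<le> (c - x) / real (Suc (m + n))"
      using assms(4) by (simp add: le_divide_eq)
    then have "a (m + n) * exp (-1) \<le> t (m + n)"
      unfolding t_def using a_nonneg by (intro mult_left_mono) auto
    moreover have "a (m + n) * exp (-1) = s (m + n) - s (Suc (m + n))"
      by (simp add: a_def exp_minus)
    ultimately show ?thesis
      by simp
  qed
  have "s n = (\<Sum>m. s (m + n) - s (Suc (m + n)))"
    using telescope by (simp add: sums_iff)
  also have "\<dots> \<le> (\<Sum>m. t (m + n))"
    by (intro suminf_le decrement_le summable_ignore_initial_segment[OF t_summable])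
       (use telescope in \<open>simp add: sums_iff\<close>)
  also have "\<dots> \<le> (\<Sum>m. t (m + n)) + (\<Sum>i<n. t i)"
    using a_nonneg by (simp add: t_def sum_nonneg)
  also have "\<dots> = suminf t"
    using suminf_split_initial_segment[OF t_summable, of n] by simp
  also have "\<dots> = decay_series a c 0 x"
    unfolding decay_series_def t_def [abs_def] by simp
  finally show ?thesis
    unfolding a_def .
qed

context
  fixes \<kappa> :: "real \<Rightarrow> real" and c M :: real
  assumes bounded: "\<forall>x>c. \<kappa> x \<le> M"
begin

lemma bdd_above_tail:
  "bdd_above ((\<lambda>x. max 0 (\<kappa> x)) ` {c + real n<..})"
proof (rule bdd_aboveI[where M = "max 0 M"])
  fix y assume "y \<in> (\<lambda>x. max 0 (\<kappa> x)) ` {c + real n<..}"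
  then obtain x where x: "c + real n < x" "y = max 0 (\<kappa> x)"
    by auto
  then have "c < x"
    using of_nat_0_le_iff[of n] by linarith
  then have "\<kappa> x \<le> M"
    using bounded by blast
  then show "y \<le> max 0 M"
    using x(2) by auto
qed

lemma le_tail_sup:
  assumes "c + real n < x"
  shows "max 0 (\<kappa> x) \<le> tail_sup \<kappa> c n"
  unfolding tail_sup_def using assms by (intro cSup_upper bdd_above_tail) auto

lemma tail_sup_nonneg: "0 \<le> tail_sup \<kappa> c n"
  using le_tail_sup[of n "c + real n + 1"] by auto

lemma decseq_tail_sup: "decseq (tail_sup \<kappa> c)"
  unfolding decseq_Suc_iff tail_sup_def by (auto intro!: cSup_subset_mono bdd_above_tail)

lemma tail_sup_tendsto_zero:
  assumes "(\<kappa> \<longlongrightarrow> 0) at_top"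
  shows "tail_sup \<kappa> c \<longlonglongrightarrow> 0"
proof (rule LIMSEQ_I)
  fix r :: real assume "r > 0"
  then have "eventually (\<lambda>x. \<bar>\<kappa> x\<bar> < r / 2) at_top"
    using tendstoD[OF assms, of "r / 2"] by simp
  then obtain X where X: "\<And>x. x \<ge> X \<Longrightarrow> \<bar>\<kappa> x\<bar> < r / 2"
    by (auto simp: eventually_at_top_linorder)
  have small: "tail_sup \<kappa> c n \<le> r / 2" if "X - c \<le> real n" for n
    unfolding tail_sup_def
  proof (rule cSup_least)
    fix y assume "y \<in> (\<lambda>x. max 0 (\<kappa> x)) ` {c + real n<..}"
    then obtain x where "c + real n < x" "y = max 0 (\<kappa> x)"
      by auto
    then show "y \<le> r / 2"
      using X[of x] that \<open>r > 0\<close> by auto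
  qed auto
  have "norm (tail_sup \<kappa> c n - 0) < r" if "nat \<lceil>X - c\<rceil> \<le> n" for n
  proof -
    have "X - c \<le> real n"
      using that by linarith
    then show ?thesis
      using small[of n] tail_sup_nonneg[of n] \<open>r > 0\<close> by simp
  qed
  then show "\<exists>n0. \<forall>n\<ge>n0. norm (tail_sup \<kappa> c n - 0) < r"
    by blast
qed

end

theorem claim8p3:
  fixes c :: real and \<kappa> :: "real \<Rightarrow> real"
  assumes bdd: "\<exists>M. \<forall>x>c. \<kappa> x \<le> M"
    and lim: "(\<kappa> \<longlongrightarrow> 0) at_top"
  shows "\<exists>\<gamma> :: real \<Rightarrow> real.
           (\<forall>x>c. \<kappa> x \<le> \<gamma> x)
         \<and> smooth_on {c<..} \<gamma>
         \<and> (\<gamma> \<longlongrightarrow> 0) at_top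
         \<and> (\<forall>k::nat. \<forall>x>c. (-1) ^ k * (deriv ^^ k) \<gamma> x \<ge> 0)"
proof -
  obtain M where M: "\<forall>x>c. \<kappa> x \<le> M"
    using bdd by blast
  define s where "s = tail_sup \<kappa> c"
  define a where "a m = exp 1 * (s m - s (Suc m))" for m
  have s_dec: "decseq s" and s_lim: "s \<longlonglongrightarrow> 0"
    using decseq_tail_sup[OF M] tail_sup_tendsto_zero[OF M lim] by (simp_all add: s_def)
  have a_nonneg: "a m \<ge> 0" for m
    using s_dec by (simp add: a_def decseq_SucD)
  have a_summable: "summable a"
    unfolding a_def [abs_def] by (intro summable_mult summable_decrements s_lim)
  have majorant: "\<kappa> x \<le> decay_series a c 0 x" if "c < x" for x
  proof -
    define n where "n = nat (\<lceil>x - c\<rceil> - 1)"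
    have "c + real n < x" "x - c \<le> real n + 1"
      using that ceiling_correct[of "x - c"] by (auto simp: n_def)
    then have "max 0 (\<kappa> x) \<le> s n" "s n \<le> decay_series a c 0 x"
      using le_tail_sup[OF M] tail_le_decay_series[OF s_dec s_lim] that
      by (auto simp: s_def a_def [abs_def])
    then show ?thesis
      by linarith
  qed
  have "(-1) ^ k * (deriv ^^ k) (decay_series a c 0) x \<ge> 0" if "c < x" for k x
    using decay_series_sign[OF a_nonneg a_summable, of c x k] that
    by (simp add: higher_deriv_decay_series[OF a_nonneg a_summable that])
  then show ?thesis
    using majorant smooth_on_decay_series[OF a_nonneg a_summable]
      decay_series_tendsto_zero[OF a_nonneg a_summable]
    by blast
qed

end
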